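(* Under the hypotheses of the context, for $\varepsilon>0$ let $(\mathbf m_\varepsilon,\rho_\varepsilon)\in V\times Q$ be the unique solution of $$(F^j(x,|\mathbf m_\varepsilon|)\mathbf m_\varepsilon,\mathbf v)+\varepsilon(\nabla\cdot\mathbf m_\varepsilon,\nabla\cdot\mathbf v)-(\nabla\cdot\mathbf v,\rho_\varepsilon)=-\langle\rho_b^j,\mathbf v\cdot\nu\rangle\ \ \forall\mathbf v\in V,\qquad \Bigl(\frac{\phi}{\Delta t}\rho_\varepsilon,q\Bigr)+(\nabla\cdot\mathbf m_\varepsilon,q)=(\bar f,q)\ \ \forall q\in Q,$$ where $\bar f=f^j+\frac{\phi}{\Delta t}\rho^{j-1}$. Then there exist constants $\mathcal K_1,\mathcal K_2>0$, independent of $\varepsilon$, such that for all sufficiently small $\varepsilon>0$, $$\|\mathbf m_\varepsilon\|_V\le\mathcal K_1\quad\text{and}\quad\|\rho_\varepsilon\|_{L^2(\Omega)}\le\mathcal K_2.$$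
   Context: Let $\Omega\subset\mathbb R^d$, $d\ge2$, be a bounded open set with $C^1$ boundary $\partial\Omega$ and outward unit normal $\nu$. Fix an integer $N\ge1$ and exponents $0=\alpha_0<\alpha_1<\dots<\alpha_N$; set $s=\alpha_N+2$ and $s^*=s/(s-1)$. Coefficients $a^j_0,\dots,a^j_N\in L^\infty(\Omega)$ satisfy $0<\underline a\le a^j_0,a^j_N\le\bar a$ and $0\le a^j_i\le\bar a$ for $1\le i\le N-1$, and $F^j(x,z)=\sum_{i=0}^N a^j_i(x)z^{\alpha_i}$ for $z\ge0$ (with $z^0=1$). Hypotheses: $\Delta t>0$; $0<\underline\phi\le\phi(x)\le\bar\phi<\infty$; $f^j\in L^2(\Omega)$; $\rho^{j-1}\in L^2(\Omega)$; $\rho^j_b\in W^{1/s,s}(\partial\Omega)$. $V=W(\mathrm{div};\Omega)=\{\mathbf v\in(L^s(\Omega))^d:\nabla\cdot\mathbf v\in L^2(\Omega)\}$ with norm $\|\mathbf v\|_V=\|\mathbf v\|_{L^s}+\|\nabla\cdot\mathbf v\|_{L^2}$, and $Q=L^2(\Omega)$; for $\mathbf v\in V$ the normal trace $\mathbf v\cdot\nu$ exists in $W^{-1/s,s^*}(\partial\Omega)$, and $\langle\rho_b^j,\mathbf v\cdot\nu\rangle$ denotes the duality pairing of $\rho^j_b$ with this normal trace. $(\cdot,\cdot)$ denotes the $L^2(\Omega)$ inner product. *)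

theory Defs
  imports "HOL-Analysis.Analysis"
begin

definition Lp_on :: "real \<Rightarrow> 'a::euclidean_space set \<Rightarrow> ('a \<Rightarrow> 'b::real_normed_vector) \<Rightarrow> bool" where
  "Lp_on p \<Omega> f \<longleftrightarrow> f \<in> borel_measurable (lebesgue_on \<Omega>) \<and>
      integrable (lebesgue_on \<Omega>) (\<lambda>x. norm (f x) powr p)"

definition Lp_norm :: "real \<Rightarrow> 'a::euclidean_space set \<Rightarrow> ('a \<Rightarrow> 'b::real_normed_vector) \<Rightarrow> real" where
  "Lp_norm p \<Omega> f = (integral\<^sup>L (lebesgue_on \<Omega>) (\<lambda>x. norm (f x) powr p)) powr (1 / p)"

definition L2_inner :: "'a::euclidean_space set \<Rightarrow> ('a \<Rightarrow> real) \<Rightarrow> ('a \<Rightarrow> real) \<Rightarrow> real" where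
  "L2_inner \<Omega> f g = integral\<^sup>L (lebesgue_on \<Omega>) (\<lambda>x. f x * g x)"

definition test_fun :: "'a::euclidean_space set \<Rightarrow> ('a \<Rightarrow> real) \<Rightarrow> ('a \<Rightarrow> 'a) \<Rightarrow> bool" where
  "test_fun \<Omega> \<psi> g \<longleftrightarrow> (\<forall>x. (\<psi> has_derivative (\<lambda>h. g x \<bullet> h)) (at x)) \<and> continuous_on UNIV g \<and>
      compact (closure {x. \<psi> x \<noteq> 0}) \<and> closure {x. \<psi> x \<noteq> 0} \<subseteq> \<Omega>"

definition weak_div :: "'a::euclidean_space set \<Rightarrow> ('a \<Rightarrow> 'a) \<Rightarrow> ('a \<Rightarrow> real) \<Rightarrow> bool" where
  "weak_div \<Omega> v D \<longleftrightarrow> (\<forall>\<psi> g. test_fun \<Omega> \<psi> g \<longrightarrow>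
      integral\<^sup>L (lebesgue_on \<Omega>) (\<lambda>x. v x \<bullet> g x) = - integral\<^sup>L (lebesgue_on \<Omega>) (\<lambda>x. D x * \<psi> x))"

definition weak_grad :: "'a::euclidean_space set \<Rightarrow> ('a \<Rightarrow> real) \<Rightarrow> ('a \<Rightarrow> 'a) \<Rightarrow> bool" where
  "weak_grad \<Omega> R G \<longleftrightarrow> (\<forall>\<psi> g. \<forall>e\<in>Basis. test_fun \<Omega> \<psi> g \<longrightarrow>
      integral\<^sup>L (lebesgue_on \<Omega>) (\<lambda>x. R x * (g x \<bullet> e)) = - integral\<^sup>L (lebesgue_on \<Omega>) (\<lambda>x. (G x \<bullet> e) * \<psi> x))"

text \<open>The space V = W(div;\<Omega>): v in L^s, with weak divergence D in L^2.\<close>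
definition in_Wdiv :: "'a::euclidean_space set \<Rightarrow> real \<Rightarrow> ('a \<Rightarrow> 'a) \<Rightarrow> ('a \<Rightarrow> real) \<Rightarrow> bool" where
  "in_Wdiv \<Omega> s v D \<longleftrightarrow> Lp_on s \<Omega> v \<and> Lp_on 2 \<Omega> D \<and> weak_div \<Omega> v D"

definition Wdiv_norm :: "'a::euclidean_space set \<Rightarrow> real \<Rightarrow> ('a \<Rightarrow> 'a) \<Rightarrow> ('a \<Rightarrow> real) \<Rightarrow> real" where
  "Wdiv_norm \<Omega> s v D = Lp_norm s \<Omega> v + Lp_norm 2 \<Omega> D"

definition C1_boundary :: "'a::euclidean_space set \<Rightarrow> bool" where
  "C1_boundary \<Omega> \<longleftrightarrow> (\<forall>x\<in>frontier \<Omega>. \<exists>r>0. \<exists>\<psi> g.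
      (\<forall>y\<in>ball x r. (\<psi> has_derivative (\<lambda>h. g y \<bullet> h)) (at y)) \<and> continuous_on (ball x r) g \<and>
      (\<forall>y\<in>ball x r. g y \<noteq> 0) \<and> (\<forall>y\<in>ball x r. y \<in> \<Omega> \<longleftrightarrow> \<psi> y < 0))"

text \<open>Duality pairing <\<rho>_b, v.\<nu>> for v in V with weak divergence D, where the boundary
  datum \<rho>_b is given as the trace of \<open>R\<close> (with weak gradient \<open>G\<close>); this is
  Green's formula, which defines the normal trace:
  <\<rho>_b, v.\<nu>> = \<integral>_\<Omega> (div v) R + v . grad R.\<close>
definition bdry_pair :: "'a::euclidean_space set \<Rightarrow> ('a \<Rightarrow> real) \<Rightarrow> ('a \<Rightarrow> 'a) \<Rightarrow> ('a \<Rightarrow> 'a) \<Rightarrow> ('a \<Rightarrow> real) \<Rightarrow> real" where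
  "bdry_pair \<Omega> R G v D = integral\<^sup>L (lebesgue_on \<Omega>) (\<lambda>x. D x * R x + v x \<bullet> G x)"

text \<open>F(x,z) = \<Sum>_{i=0}^N a_i(x) z^{\<alpha>_i}, with \<alpha>_0 = 0 and z^0 = 1.\<close>
definition Fcoef :: "(nat \<Rightarrow> 'a \<Rightarrow> real) \<Rightarrow> (nat \<Rightarrow> real) \<Rightarrow> nat \<Rightarrow> 'a \<Rightarrow> real \<Rightarrow> real" where
  "Fcoef a \<alpha> N x z = a 0 x + (\<Sum>i\<in>{1..N}. a i x * z powr \<alpha> i)"

end

theory Submission
  imports Defs
begin

(* Test the first equation with v = m and the second with q = rho and q = R.  Since the boundary
   pairing is given by Green's formula, <rho_b, m.nu> = (div m, R) + (m, grad R), the three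
   identities combine into an energy identity in which the epsilon-term has a good sign.  The
   coercivity F(x,z) z^2 >= a_lo z^s, Young's inequality with the conjugate exponents s, s* for
   (m, grad R) and weighted Cauchy inequalities for the L^2 pairings then bound the L^s norm of m
   and the L^2 norm of rho independently of epsilon.  Testing the second equation with
   q = div m finally bounds the L^2 norm of div m by those of fbar and rho. *)

lemma mult_le_scaled_squares:
  fixes u w c :: real
  assumes "0 < c"
  shows "u * w \<le> c / 4 * w\<^sup>2 + u\<^sup>2 / c"
proof -
  have "c / 4 * w\<^sup>2 + u\<^sup>2 / c - u * w = (c * w - 2 * u)\<^sup>2 / (4 * c)"
    using assms by (simp add: field_simps power2_eq_square)
  moreover have "0 \<le> (c * w - 2 * u)\<^sup>2 / (4 * c)"
    using assms by simp
  ultimately show ?thesis by linarith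
qed

lemma Youngs_inequality_weighted:
  fixes p \<eta> :: real
  assumes "1 < p" "0 < \<eta>"
  obtains C where "\<And>u w. 0 \<le> u \<Longrightarrow> 0 \<le> w \<Longrightarrow> u * w \<le> \<eta> * u powr p + C * w powr (p / (p - 1))"
proof -
  define q where "q = p / (p - 1)"
  define k where "k = (p * \<eta>) powr (1 / p)"
  have k: "0 < k" "k powr p = p * \<eta>"
    using assms by (simp_all add: k_def powr_powr)
  have "u * w \<le> \<eta> * u powr p + 1 / (q * k powr q) * w powr q" if "0 \<le> u" "0 \<le> w" for u w
  proof -
    have "(k * u) * (w / k) \<le> (k * u) powr p / p + (w / k) powr q / q"
      using assms k that by (intro Youngs_inequality) (auto simp: q_def field_simps)
    then show ?thesis
      using assms k that by (simp add: powr_mult powr_divide q_def field_simps)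
  qed
  then show ?thesis
    unfolding q_def by (rule that)
qed

lemma powr_le_one_plus_powr:
  fixes z p q :: real
  assumes "0 \<le> z" "0 \<le> p" "p \<le> q"
  shows "z powr p \<le> 1 + z powr q"
proof (cases "z \<le> 1")
  case True
  then have "z powr p \<le> 1"
    using assms by (intro powr_le1) auto
  then show ?thesis
    using powr_ge_zero[of z q] by linarith
next
  case False
  then have "z powr p \<le> z powr q"
    using assms by (intro powr_mono) auto
  then show ?thesis by linarith
qed

lemma Fcoef_mult_square:
  assumes "0 \<le> z"
  shows "Fcoef a \<alpha> N x z * z\<^sup>2 = a 0 x * z\<^sup>2 + (\<Sum>i=1..N. a i x * z powr (\<alpha> i + 2))"
proof -
  have "z powr b * z\<^sup>2 = z powr (b + 2)" for b
    using assms by (cases "z = 0") (simp_all add: powr_add)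
  then show ?thesis
    unfolding Fcoef_def by (simp add: distrib_right sum_distrib_right mult.assoc)
qed

lemma Fcoef_coercive:
  assumes "0 \<le> z" "1 \<le> N" "\<And>i. i \<le> N \<Longrightarrow> 0 \<le> a i x" "lo \<le> a N x"
  shows "lo * z powr (\<alpha> N + 2) \<le> Fcoef a \<alpha> N x z * z\<^sup>2"
proof -
  have "lo * z powr (\<alpha> N + 2) \<le> a N x * z powr (\<alpha> N + 2)"
    using assms(4) by (intro mult_right_mono) auto
  also have "\<dots> \<le> (\<Sum>i=1..N. a i x * z powr (\<alpha> i + 2))"
    using assms(2,3) by (intro member_le_sum) auto
  also have "\<dots> \<le> Fcoef a \<alpha> N x z * z\<^sup>2"
    using assms(3)[of 0] by (simp add: Fcoef_mult_square[OF assms(1)])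
  finally show ?thesis .
qed

lemma Fcoef_growth:
  assumes "0 \<le> z" "\<And>i. i \<le> N \<Longrightarrow> 0 \<le> a i x \<and> a i x \<le> hi"
    and "\<And>i. i \<le> N \<Longrightarrow> 0 \<le> \<alpha> i \<and> \<alpha> i \<le> \<alpha> N"
  shows "Fcoef a \<alpha> N x z * z\<^sup>2 \<le> (real N + 1) * hi * (1 + z powr (\<alpha> N + 2))"
proof -
  let ?B = "hi * (1 + z powr (\<alpha> N + 2))"
  have term_le: "a i x * z powr e \<le> ?B" if "i \<le> N" "0 \<le> e" "e \<le> \<alpha> N + 2" for i e
    using assms(2)[OF that(1)] powr_le_one_plus_powr[OF assms(1) that(2,3)]
    by (intro mult_mono) auto
  have "a 0 x * z\<^sup>2 \<le> ?B"
    using term_le[of 0 2] assms(1,3) by simp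
  moreover have "(\<Sum>i=1..N. a i x * z powr (\<alpha> i + 2)) \<le> real N * ?B"
    using sum_mono[of "{1..N}" "\<lambda>i. a i x * z powr (\<alpha> i + 2)" "\<lambda>_. ?B"] term_le assms(3)
    by simp
  ultimately have "Fcoef a \<alpha> N x z * z\<^sup>2 \<le> ?B + real N * ?B"
    unfolding Fcoef_mult_square[OF assms(1)] by linarith
  then show ?thesis
    by (simp add: algebra_simps)
qed

definition square_integrable :: "'a measure \<Rightarrow> ('a \<Rightarrow> real) \<Rightarrow> bool" where
  "square_integrable M f \<longleftrightarrow> f \<in> borel_measurable M \<and> integrable M (\<lambda>x. (f x)\<^sup>2)"

lemma square_integrable_imp_integrable_mult:
  assumes "square_integrable M f" "square_integrable M g"
  shows "integrable M (\<lambda>x. f x * g x)"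
proof (rule Bochner_Integration.integrable_bound)
  show "integrable M (\<lambda>x. (g x)\<^sup>2 / 2 + (f x)\<^sup>2 / 2)"
    using assms unfolding square_integrable_def by auto
  show "AE x in M. norm (f x * g x) \<le> norm ((g x)\<^sup>2 / 2 + (f x)\<^sup>2 / 2)"
    using mult_le_scaled_squares[of 2 "\<bar>f x\<bar>" "\<bar>g x\<bar>" for x] by (simp add: abs_mult)
qed (use assms in \<open>auto simp: square_integrable_def\<close>)

lemma square_integrable_add:
  assumes "square_integrable M f" "square_integrable M g"
  shows "square_integrable M (\<lambda>x. f x + g x)"
  unfolding square_integrable_def
proof
  show "(\<lambda>x. f x + g x) \<in> borel_measurable M"
    using assms unfolding square_integrable_def by auto
  show "integrable M (\<lambda>x. (f x + g x)\<^sup>2)"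
  proof (rule Bochner_Integration.integrable_bound)
    show "integrable M (\<lambda>x. 2 * (f x)\<^sup>2 + 2 * (g x)\<^sup>2)"
      using assms unfolding square_integrable_def by auto
    have "(f x + g x)\<^sup>2 \<le> 2 * (f x)\<^sup>2 + 2 * (g x)\<^sup>2" for x
      using mult_le_scaled_squares[of 2 "f x" "g x"] by (simp add: power2_sum)
    then show "AE x in M. norm ((f x + g x)\<^sup>2) \<le> norm (2 * (f x)\<^sup>2 + 2 * (g x)\<^sup>2)"
      by simp
  qed (use assms in \<open>auto simp: square_integrable_def\<close>)
qed

lemma square_integrable_bounded_mult:
  assumes "square_integrable M f" "h \<in> borel_measurable M" "\<And>x. x \<in> space M \<Longrightarrow> \<bar>h x\<bar> \<le> C"
  shows "square_integrable M (\<lambda>x. h x * f x)"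
  unfolding square_integrable_def
proof
  show "(\<lambda>x. h x * f x) \<in> borel_measurable M"
    using assms unfolding square_integrable_def by auto
  show "integrable M (\<lambda>x. (h x * f x)\<^sup>2)"
  proof (rule Bochner_Integration.integrable_bound)
    show "integrable M (\<lambda>x. C\<^sup>2 * (f x)\<^sup>2)"
      using assms unfolding square_integrable_def by auto
    have "(h x * f x)\<^sup>2 \<le> C\<^sup>2 * (f x)\<^sup>2" if "x \<in> space M" for x
      using power_mono[OF assms(3)[OF that], of 2]
      by (simp add: power_mult_distrib mult_right_mono)
    then show "AE x in M. norm ((h x * f x)\<^sup>2) \<le> norm (C\<^sup>2 * (f x)\<^sup>2)"
      by (intro AE_I2) simp
  qed (use assms in \<open>auto simp: square_integrable_def\<close>)
qed

lemma integral_mult_le_scaled_squares: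
  fixes u w :: "'a \<Rightarrow> real"
  assumes "integrable M (\<lambda>x. (u x)\<^sup>2)" "integrable M (\<lambda>x. (w x)\<^sup>2)" "0 < c"
  shows "(\<integral>x. u x * w x \<partial>M) \<le> c / 4 * (\<integral>x. (w x)\<^sup>2 \<partial>M) + (\<integral>x. (u x)\<^sup>2 \<partial>M) / c"
proof -
  have "(\<integral>x. u x * w x \<partial>M) \<le> (\<integral>x. c / 4 * (w x)\<^sup>2 + (u x)\<^sup>2 / c \<partial>M)"
    using assms mult_le_scaled_squares by (intro integral_mono') auto
  then show ?thesis
    using assms by simp
qed

lemma integral_square_bounded_mult_le:
  fixes f h :: "'a \<Rightarrow> real"
  assumes "integrable M (\<lambda>x. (f x)\<^sup>2)" "\<And>x. x \<in> space M \<Longrightarrow> \<bar>h x\<bar> \<le> C"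
  shows "(\<integral>x. (h x * f x)\<^sup>2 \<partial>M) \<le> C\<^sup>2 * (\<integral>x. (f x)\<^sup>2 \<partial>M)"
proof -
  have "(\<integral>x. (h x * f x)\<^sup>2 \<partial>M) \<le> (\<integral>x. C\<^sup>2 * (f x)\<^sup>2 \<partial>M)"
  proof (rule integral_mono')
    fix x assume "x \<in> space M"
    then show "(h x * f x)\<^sup>2 \<le> C\<^sup>2 * (f x)\<^sup>2"
      using power_mono[OF assms(2), of x 2] by (simp add: power_mult_distrib mult_right_mono)
  qed (use assms in auto)
  then show ?thesis by simp
qed

lemma integrable_inner_conjugate:
  fixes m G :: "'b \<Rightarrow> 'a::euclidean_space"
  assumes "1 < p" "m \<in> borel_measurable M" "G \<in> borel_measurable M"
    and "integrable M (\<lambda>x. norm (m x) powr p)" "integrable M (\<lambda>x. norm (G x) powr (p / (p - 1)))"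
  shows "integrable M (\<lambda>x. m x \<bullet> G x)"
proof -
  obtain C where young: "\<And>u w. 0 \<le> u \<Longrightarrow> 0 \<le> w \<Longrightarrow> u * w \<le> u powr p + C * w powr (p / (p - 1))"
    using Youngs_inequality_weighted[OF assms(1), of 1] by auto
  let ?g = "\<lambda>x. norm (m x) powr p + C * norm (G x) powr (p / (p - 1))"
  have bound: "norm (m x \<bullet> G x) \<le> norm (?g x)" for x
  proof -
    have "norm (m x \<bullet> G x) \<le> norm (m x) * norm (G x)"
      using Cauchy_Schwarz_ineq2 by simp
    also have "\<dots> \<le> ?g x"
      by (rule young) simp_all
    also have "\<dots> \<le> norm (?g x)"
      by simp
    finally show ?thesis .
  qed
  show ?thesis
  proof (rule Bochner_Integration.integrable_bound)
    show "integrable M ?g"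
      by (rule Bochner_Integration.integrable_add[OF assms(4) integrable_mult_right[OF assms(5)]])
    show "(\<lambda>x. m x \<bullet> G x) \<in> borel_measurable M"
      using assms(2,3) by (rule borel_measurable_inner)
    show "AE x in M. norm (m x \<bullet> G x) \<le> norm (?g x)"
      using bound by simp
  qed
qed

lemma Lp_on_2_iff_square_integrable:
  fixes f :: "'a::euclidean_space \<Rightarrow> real"
  shows "Lp_on 2 \<Omega> f \<longleftrightarrow> square_integrable (lebesgue_on \<Omega>) f"
  by (simp add: Lp_on_def square_integrable_def)

lemma Lp_norm_2_real:
  fixes f :: "'a::euclidean_space \<Rightarrow> real"
  shows "Lp_norm 2 \<Omega> f = (\<integral>x. (f x)\<^sup>2 \<partial>lebesgue_on \<Omega>) powr (1 / 2)"
  by (simp add: Lp_norm_def)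

locale forchheimer_time_step =
  fixes \<Omega> :: "'a::euclidean_space set"
    and N :: nat and \<alpha> :: "nat \<Rightarrow> real" and a :: "nat \<Rightarrow> 'a \<Rightarrow> real"
    and a_lo a_hi dt phi_lo phi_hi :: real
    and phi f rho_prev R :: "'a \<Rightarrow> real" and G :: "'a \<Rightarrow> 'a"
  assumes \<Omega>_lmeasurable: "\<Omega> \<in> lmeasurable"
    and N_pos: "1 \<le> N"
    and alpha_range: "\<And>i. i \<le> N \<Longrightarrow> 0 \<le> \<alpha> i \<and> \<alpha> i \<le> \<alpha> N"
    and a_meas: "\<And>i. i \<le> N \<Longrightarrow> a i \<in> borel_measurable (lebesgue_on \<Omega>)"
    and a_lo_pos: "0 < a_lo"
    and a_range: "\<And>i x. i \<le> N \<Longrightarrow> x \<in> \<Omega> \<Longrightarrow> 0 \<le> a i x \<and> a i x \<le> a_hi"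
    and a_N_lower: "\<And>x. x \<in> \<Omega> \<Longrightarrow> a_lo \<le> a N x"
    and dt_pos: "0 < dt"
    and phi_meas: "phi \<in> borel_measurable (lebesgue_on \<Omega>)"
    and phi_lo_pos: "0 < phi_lo"
    and phi_range: "\<And>x. x \<in> \<Omega> \<Longrightarrow> phi_lo \<le> phi x \<and> phi x \<le> phi_hi"
    and f_L2: "Lp_on 2 \<Omega> f"
    and rho_prev_L2: "Lp_on 2 \<Omega> rho_prev"
    and R_L2: "Lp_on 2 \<Omega> R"
    and G_Lq: "Lp_on ((\<alpha> N + 2) / (\<alpha> N + 1)) \<Omega> G"
begin

definition s :: real where
  "s = \<alpha> N + 2"

definition fbar :: "'a \<Rightarrow> real" where
  "fbar = (\<lambda>x. f x + phi x / dt * rho_prev x)"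

definition weak_solution :: "real \<Rightarrow> ('a \<Rightarrow> 'a) \<Rightarrow> ('a \<Rightarrow> real) \<Rightarrow> ('a \<Rightarrow> real) \<Rightarrow> bool" where
  "weak_solution \<epsilon> m rho Dm \<longleftrightarrow>
    in_Wdiv \<Omega> s m Dm \<and> Lp_on 2 \<Omega> rho \<and>
    (\<forall>v Dv. in_Wdiv \<Omega> s v Dv \<longrightarrow>
        integral\<^sup>L (lebesgue_on \<Omega>) (\<lambda>x. Fcoef a \<alpha> N x (norm (m x)) * (m x \<bullet> v x))
        + \<epsilon> * L2_inner \<Omega> Dm Dv - L2_inner \<Omega> Dv rho
        = - bdry_pair \<Omega> R G v Dv) \<and>
    (\<forall>q. Lp_on 2 \<Omega> q \<longrightarrow>
        L2_inner \<Omega> (\<lambda>x. phi x / dt * rho x) q + L2_inner \<Omega> Dm q = L2_inner \<Omega> fbar q)"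

lemma s_ge_2: "2 \<le> s"
  using alpha_range[of N] by (simp add: s_def)

lemma G_conjugate: "integrable (lebesgue_on \<Omega>) (\<lambda>x. norm (G x) powr (s / (s - 1)))"
  and G_measurable: "G \<in> borel_measurable (lebesgue_on \<Omega>)"
proof -
  have "(\<alpha> N + 2) / (\<alpha> N + 1) = s / (s - 1)"
    by (simp add: s_def algebra_simps)
  then show "integrable (lebesgue_on \<Omega>) (\<lambda>x. norm (G x) powr (s / (s - 1)))"
    and "G \<in> borel_measurable (lebesgue_on \<Omega>)"
    using G_Lq by (simp_all add: Lp_on_def)
qed

lemma phi_dt_bounds:
  assumes "x \<in> \<Omega>"
  shows "phi_lo / dt \<le> phi x / dt" and "\<bar>phi x / dt\<bar> \<le> phi_hi / dt"
  using phi_range[OF assms] phi_lo_pos dt_pos by (auto simp: divide_right_mono)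

lemma square_integrable_phi_dt_mult:
  assumes "Lp_on 2 \<Omega> u"
  shows "square_integrable (lebesgue_on \<Omega>) (\<lambda>x. phi x / dt * u x)"
  using assms phi_meas phi_dt_bounds(2)
  by (intro square_integrable_bounded_mult) (auto simp: Lp_on_2_iff_square_integrable)

lemma square_integrable_fbar: "square_integrable (lebesgue_on \<Omega>) fbar"
  unfolding fbar_def using f_L2 rho_prev_L2
  by (intro square_integrable_add square_integrable_phi_dt_mult) (simp add: Lp_on_2_iff_square_integrable)

lemma flux_term_coercive:
  fixes m :: "'a \<Rightarrow> 'a"
  assumes m: "m \<in> borel_measurable (lebesgue_on \<Omega>)"
    and m_Ls: "integrable (lebesgue_on \<Omega>) (\<lambda>x. norm (m x) powr s)"
  shows "integrable (lebesgue_on \<Omega>) (\<lambda>x. Fcoef a \<alpha> N x (norm (m x)) * (m x \<bullet> m x))"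
    and "a_lo * integral\<^sup>L (lebesgue_on \<Omega>) (\<lambda>x. norm (m x) powr s)
      \<le> integral\<^sup>L (lebesgue_on \<Omega>) (\<lambda>x. Fcoef a \<alpha> N x (norm (m x)) * (m x \<bullet> m x))"
proof -
  let ?F = "\<lambda>x. Fcoef a \<alpha> N x (norm (m x)) * (m x \<bullet> m x)"
  have F_bounds: "a_lo * norm (m x) powr s \<le> ?F x \<and> ?F x \<le> (real N + 1) * a_hi * (1 + norm (m x) powr s)"
    if "x \<in> \<Omega>" for x
  proof -
    have "a_lo * norm (m x) powr (\<alpha> N + 2) \<le> Fcoef a \<alpha> N x (norm (m x)) * (norm (m x))\<^sup>2"
      using a_range[OF _ that] a_N_lower[OF that] by (intro Fcoef_coercive N_pos) auto
    moreover have "Fcoef a \<alpha> N x (norm (m x)) * (norm (m x))\<^sup>2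
        \<le> (real N + 1) * a_hi * (1 + norm (m x) powr (\<alpha> N + 2))"
      using a_range[OF _ that] alpha_range by (intro Fcoef_growth) auto
    ultimately show ?thesis
      by (simp add: s_def power2_norm_eq_inner)
  qed
  have F_meas: "?F \<in> borel_measurable (lebesgue_on \<Omega>)"
    unfolding Fcoef_def using m a_meas
    by (intro borel_measurable_times borel_measurable_add borel_measurable_sum borel_measurable_inner
        measurable_abs_powr borel_measurable_norm borel_measurable_const) auto
  have "finite_measure (lebesgue_on \<Omega>)"
    by (rule finite_measure_lebesgue_on[OF \<Omega>_lmeasurable])
  then have "integrable (lebesgue_on \<Omega>) (\<lambda>x. (real N + 1) * a_hi * (1 + norm (m x) powr s))"
    using m_Ls by (intro integrable_mult_right Bochner_Integration.integrable_add finite_measure.integrable_const)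
  moreover have "norm (?F x) \<le> norm ((real N + 1) * a_hi * (1 + norm (m x) powr s))"
    if "x \<in> space (lebesgue_on \<Omega>)" for x
  proof -
    have "0 \<le> a_lo * norm (m x) powr s"
      using a_lo_pos by simp
    then show ?thesis
      using F_bounds[of x] that unfolding real_norm_def by auto
  qed
  ultimately show F_int: "integrable (lebesgue_on \<Omega>) ?F"
    by (rule Bochner_Integration.integrable_bound[OF _ F_meas AE_I2])
  have "integral\<^sup>L (lebesgue_on \<Omega>) (\<lambda>x. a_lo * norm (m x) powr s) \<le> integral\<^sup>L (lebesgue_on \<Omega>) ?F"
    using F_bounds by (intro integral_mono[OF _ F_int]) (use m_Ls in auto)
  then show "a_lo * integral\<^sup>L (lebesgue_on \<Omega>) (\<lambda>x. norm (m x) powr s) \<le> integral\<^sup>L (lebesgue_on \<Omega>) ?F"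
    by simp
qed

lemma energy_identity:
  assumes "weak_solution \<epsilon> m rho Dm"
  shows "integral\<^sup>L (lebesgue_on \<Omega>) (\<lambda>x. Fcoef a \<alpha> N x (norm (m x)) * (m x \<bullet> m x))
      + \<epsilon> * L2_inner \<Omega> Dm Dm + L2_inner \<Omega> (\<lambda>x. phi x / dt * rho x) rho
    = L2_inner \<Omega> fbar rho - L2_inner \<Omega> fbar R + L2_inner \<Omega> (\<lambda>x. phi x / dt * rho x) R
      - integral\<^sup>L (lebesgue_on \<Omega>) (\<lambda>x. m x \<bullet> G x)"
proof -
  from assms have m_Wdiv: "in_Wdiv \<Omega> s m Dm" and rho_L2: "Lp_on 2 \<Omega> rho"
    and flux_eq: "\<And>v Dv. in_Wdiv \<Omega> s v Dv \<Longrightarrow>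
        integral\<^sup>L (lebesgue_on \<Omega>) (\<lambda>x. Fcoef a \<alpha> N x (norm (m x)) * (m x \<bullet> v x))
        + \<epsilon> * L2_inner \<Omega> Dm Dv - L2_inner \<Omega> Dv rho = - bdry_pair \<Omega> R G v Dv"
    and mass_eq: "\<And>q. Lp_on 2 \<Omega> q \<Longrightarrow>
        L2_inner \<Omega> (\<lambda>x. phi x / dt * rho x) q + L2_inner \<Omega> Dm q = L2_inner \<Omega> fbar q"
    unfolding weak_solution_def by blast+
  have "1 < s"
    using s_ge_2 by simp
  with m_Wdiv have "integrable (lebesgue_on \<Omega>) (\<lambda>x. m x \<bullet> G x)"
    by (intro integrable_inner_conjugate[OF _ _ G_measurable _ G_conjugate]) (auto simp: in_Wdiv_def Lp_on_def)
  moreover have "integrable (lebesgue_on \<Omega>) (\<lambda>x. Dm x * R x)"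
    using m_Wdiv R_L2
    by (intro square_integrable_imp_integrable_mult) (auto simp: in_Wdiv_def Lp_on_2_iff_square_integrable)
  ultimately have "bdry_pair \<Omega> R G m Dm
      = L2_inner \<Omega> Dm R + integral\<^sup>L (lebesgue_on \<Omega>) (\<lambda>x. m x \<bullet> G x)"
    unfolding bdry_pair_def L2_inner_def by (rule Bochner_Integration.integral_add[rotated])
  then show ?thesis
    using flux_eq[OF m_Wdiv] mass_eq[OF rho_L2] mass_eq[OF R_L2] by linarith
qed

lemma storage_term_lower_bound:
  assumes "Lp_on 2 \<Omega> rho"
  shows "phi_lo / dt * integral\<^sup>L (lebesgue_on \<Omega>) (\<lambda>x. (rho x)\<^sup>2)
    \<le> L2_inner \<Omega> (\<lambda>x. phi x / dt * rho x) rho"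
proof -
  have "integral\<^sup>L (lebesgue_on \<Omega>) (\<lambda>x. phi_lo / dt * (rho x)\<^sup>2)
      \<le> integral\<^sup>L (lebesgue_on \<Omega>) (\<lambda>x. phi x / dt * rho x * rho x)"
  proof (rule integral_mono)
    show "integrable (lebesgue_on \<Omega>) (\<lambda>x. phi x / dt * rho x * rho x)"
      using assms square_integrable_phi_dt_mult[OF assms]
      by (intro square_integrable_imp_integrable_mult) (simp_all add: Lp_on_2_iff_square_integrable)
    show "integrable (lebesgue_on \<Omega>) (\<lambda>x. phi_lo / dt * (rho x)\<^sup>2)"
      using assms by (simp add: Lp_on_def)
    fix x assume "x \<in> space (lebesgue_on \<Omega>)"
    then show "phi_lo / dt * (rho x)\<^sup>2 \<le> phi x / dt * rho x * rho x"
      using mult_right_mono[OF phi_dt_bounds(1) zero_le_power2[of "rho x"], of x]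
      by (simp add: power2_eq_square mult.assoc)
  qed
  then show ?thesis
    by (simp add: L2_inner_def)
qed

lemma storage_boundary_term_bound:
  assumes "Lp_on 2 \<Omega> rho" "0 < c"
  shows "L2_inner \<Omega> (\<lambda>x. phi x / dt * rho x) R
    \<le> c / 4 * integral\<^sup>L (lebesgue_on \<Omega>) (\<lambda>x. (rho x)\<^sup>2)
      + (phi_hi / dt)\<^sup>2 * integral\<^sup>L (lebesgue_on \<Omega>) (\<lambda>x. (R x)\<^sup>2) / c"
proof -
  have R_sq: "integrable (lebesgue_on \<Omega>) (\<lambda>x. (R x)\<^sup>2)"
    using R_L2 by (simp add: Lp_on_def)
  have "integral\<^sup>L (lebesgue_on \<Omega>) (\<lambda>x. (phi x / dt * R x)\<^sup>2)
      \<le> (phi_hi / dt)\<^sup>2 * integral\<^sup>L (lebesgue_on \<Omega>) (\<lambda>x. (R x)\<^sup>2)"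
    using phi_dt_bounds(2) by (intro integral_square_bounded_mult_le R_sq) auto
  then have "integral\<^sup>L (lebesgue_on \<Omega>) (\<lambda>x. (phi x / dt * R x)\<^sup>2) / c
      \<le> (phi_hi / dt)\<^sup>2 * integral\<^sup>L (lebesgue_on \<Omega>) (\<lambda>x. (R x)\<^sup>2) / c"
    using assms(2) by (simp add: divide_right_mono)
  moreover have "L2_inner \<Omega> (\<lambda>x. phi x / dt * rho x) R
      \<le> c / 4 * integral\<^sup>L (lebesgue_on \<Omega>) (\<lambda>x. (rho x)\<^sup>2)
        + integral\<^sup>L (lebesgue_on \<Omega>) (\<lambda>x. (phi x / dt * R x)\<^sup>2) / c"
    using integral_mult_le_scaled_squares[of _ "\<lambda>x. phi x / dt * R x" rho c]
      square_integrable_phi_dt_mult[OF R_L2] assms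
    by (simp add: L2_inner_def Lp_on_def square_integrable_def mult_ac)
  ultimately show ?thesis
    by linarith
qed

lemma boundary_flux_term_bound:
  obtains C where "\<And>m. m \<in> borel_measurable (lebesgue_on \<Omega>) \<Longrightarrow>
    integrable (lebesgue_on \<Omega>) (\<lambda>x. norm (m x) powr s) \<Longrightarrow>
    - integral\<^sup>L (lebesgue_on \<Omega>) (\<lambda>x. m x \<bullet> G x)
      \<le> a_lo / 2 * integral\<^sup>L (lebesgue_on \<Omega>) (\<lambda>x. norm (m x) powr s) + C"
proof -
  obtain C where young: "\<And>u w. 0 \<le> u \<Longrightarrow> 0 \<le> w \<Longrightarrow>
      u * w \<le> a_lo / 2 * u powr s + C * w powr (s / (s - 1))"
    using Youngs_inequality_weighted[of s "a_lo / 2"] s_ge_2 a_lo_pos by auto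
  have "- integral\<^sup>L (lebesgue_on \<Omega>) (\<lambda>x. m x \<bullet> G x)
      \<le> a_lo / 2 * integral\<^sup>L (lebesgue_on \<Omega>) (\<lambda>x. norm (m x) powr s)
        + C * integral\<^sup>L (lebesgue_on \<Omega>) (\<lambda>x. norm (G x) powr (s / (s - 1)))"
    if m_meas: "m \<in> borel_measurable (lebesgue_on \<Omega>)"
      and m_Ls: "integrable (lebesgue_on \<Omega>) (\<lambda>x. norm (m x) powr s)" for m :: "'a \<Rightarrow> 'a"
  proof -
    have "integral\<^sup>L (lebesgue_on \<Omega>) (\<lambda>x. - (m x \<bullet> G x))
        \<le> integral\<^sup>L (lebesgue_on \<Omega>) (\<lambda>x. a_lo / 2 * norm (m x) powr s + C * norm (G x) powr (s / (s - 1)))"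
    proof (rule integral_mono)
      show "integrable (lebesgue_on \<Omega>) (\<lambda>x. - (m x \<bullet> G x))"
        using s_ge_2 by (simp add: integrable_inner_conjugate[OF _ m_meas G_measurable m_Ls G_conjugate])
      fix x
      have "- (m x \<bullet> G x) \<le> norm (m x) * norm (G x)"
        using Cauchy_Schwarz_ineq2[of "m x" "G x"] by simp
      also have "\<dots> \<le> a_lo / 2 * norm (m x) powr s + C * norm (G x) powr (s / (s - 1))"
        by (rule young) simp_all
      finally show "- (m x \<bullet> G x) \<le> a_lo / 2 * norm (m x) powr s + C * norm (G x) powr (s / (s - 1))" .
    qed (use m_Ls G_conjugate in simp)
    then show ?thesis
      using m_Ls G_conjugate by simp
  qed
  then show ?thesis
    by (rule that)
qed

lemma energy_estimate:
  obtains B where "\<And>\<epsilon> m rho Dm. 0 \<le> \<epsilon> \<Longrightarrow> weak_solution \<epsilon> m rho Dm \<Longrightarrow>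
    a_lo / 2 * integral\<^sup>L (lebesgue_on \<Omega>) (\<lambda>x. norm (m x) powr s)
    + phi_lo / dt / 2 * integral\<^sup>L (lebesgue_on \<Omega>) (\<lambda>x. (rho x)\<^sup>2) \<le> B"
proof -
  obtain C where boundary_flux: "\<And>m. m \<in> borel_measurable (lebesgue_on \<Omega>) \<Longrightarrow>
      integrable (lebesgue_on \<Omega>) (\<lambda>x. norm (m x) powr s) \<Longrightarrow>
      - integral\<^sup>L (lebesgue_on \<Omega>) (\<lambda>x. m x \<bullet> G x)
        \<le> a_lo / 2 * integral\<^sup>L (lebesgue_on \<Omega>) (\<lambda>x. norm (m x) powr s) + C"
    using boundary_flux_term_bound by blast
  define c where "c = phi_lo / dt"
  have c_pos: "0 < c"
    using phi_lo_pos dt_pos by (simp add: c_def)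
  define K_fbar where "K_fbar = integral\<^sup>L (lebesgue_on \<Omega>) (\<lambda>x. (fbar x)\<^sup>2)"
  define K_R where "K_R = integral\<^sup>L (lebesgue_on \<Omega>) (\<lambda>x. (R x)\<^sup>2)"
  have fbar_sq: "integrable (lebesgue_on \<Omega>) (\<lambda>x. (fbar x)\<^sup>2)"
    and R_sq: "integrable (lebesgue_on \<Omega>) (\<lambda>x. (R x)\<^sup>2)"
    using square_integrable_fbar R_L2 by (simp_all add: square_integrable_def Lp_on_def)
  have "a_lo / 2 * integral\<^sup>L (lebesgue_on \<Omega>) (\<lambda>x. norm (m x) powr s)
      + c / 2 * integral\<^sup>L (lebesgue_on \<Omega>) (\<lambda>x. (rho x)\<^sup>2)
    \<le> K_fbar / c + (K_fbar + K_R) / 2 + (phi_hi / dt)\<^sup>2 * K_R / c + C"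
    if "0 \<le> \<epsilon>" "weak_solution \<epsilon> m rho Dm" for \<epsilon> m rho Dm
  proof -
    from that(2) have m_meas: "m \<in> borel_measurable (lebesgue_on \<Omega>)"
      and m_Ls: "integrable (lebesgue_on \<Omega>) (\<lambda>x. norm (m x) powr s)"
      and rho_L2: "Lp_on 2 \<Omega> rho"
      by (auto simp: weak_solution_def in_Wdiv_def Lp_on_def)
    then have rho_sq: "integrable (lebesgue_on \<Omega>) (\<lambda>x. (rho x)\<^sup>2)"
      by (simp add: Lp_on_def)
    have source:
      "L2_inner \<Omega> fbar rho \<le> c / 4 * integral\<^sup>L (lebesgue_on \<Omega>) (\<lambda>x. (rho x)\<^sup>2) + K_fbar / c"
      unfolding L2_inner_def K_fbar_def by (rule integral_mult_le_scaled_squares[OF fbar_sq rho_sq c_pos])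
    have "integral\<^sup>L (lebesgue_on \<Omega>) (\<lambda>x. - fbar x * R x) \<le> 2 / 4 * K_R + K_fbar / 2"
      using integral_mult_le_scaled_squares[of _ "\<lambda>x. - fbar x" R 2] fbar_sq R_sq
      by (simp add: K_R_def K_fbar_def)
    then have boundary_source: "- L2_inner \<Omega> fbar R \<le> (K_fbar + K_R) / 2"
      by (simp add: L2_inner_def)
    have "0 \<le> \<epsilon> * L2_inner \<Omega> Dm Dm"
      using that(1) by (simp add: L2_inner_def)
    then show ?thesis
      using energy_identity[OF that(2)] flux_term_coercive(2)[OF m_meas m_Ls]
        storage_term_lower_bound[OF rho_L2, folded c_def] source boundary_source
        storage_boundary_term_bound[OF rho_L2 c_pos, folded K_R_def] boundary_flux[OF m_meas m_Ls]
      by linarith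
  qed
  then show ?thesis
    unfolding c_def by (rule that)
qed

lemma divergence_estimate:
  assumes "weak_solution \<epsilon> m rho Dm"
  shows "integral\<^sup>L (lebesgue_on \<Omega>) (\<lambda>x. (Dm x)\<^sup>2)
    \<le> 2 * integral\<^sup>L (lebesgue_on \<Omega>) (\<lambda>x. (fbar x)\<^sup>2)
      + 2 * (phi_hi / dt)\<^sup>2 * integral\<^sup>L (lebesgue_on \<Omega>) (\<lambda>x. (rho x)\<^sup>2)"
proof -
  from assms have Dm_L2: "Lp_on 2 \<Omega> Dm" and rho_L2: "Lp_on 2 \<Omega> rho"
    and mass_eq: "L2_inner \<Omega> (\<lambda>x. phi x / dt * rho x) Dm + L2_inner \<Omega> Dm Dm = L2_inner \<Omega> fbar Dm"
    unfolding weak_solution_def in_Wdiv_def by blast+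
  have Dm_sq: "integrable (lebesgue_on \<Omega>) (\<lambda>x. (Dm x)\<^sup>2)"
    and rho_sq: "integrable (lebesgue_on \<Omega>) (\<lambda>x. (rho x)\<^sup>2)"
    and fbar_sq: "integrable (lebesgue_on \<Omega>) (\<lambda>x. (fbar x)\<^sup>2)"
    using Dm_L2 rho_L2 square_integrable_fbar by (simp_all add: Lp_on_def square_integrable_def)
  have source: "L2_inner \<Omega> fbar Dm
      \<le> 1 / 4 * integral\<^sup>L (lebesgue_on \<Omega>) (\<lambda>x. (Dm x)\<^sup>2)
        + integral\<^sup>L (lebesgue_on \<Omega>) (\<lambda>x. (fbar x)\<^sup>2)"
    using integral_mult_le_scaled_squares[OF fbar_sq Dm_sq, of 1] by (simp add: L2_inner_def)
  have "integral\<^sup>L (lebesgue_on \<Omega>) (\<lambda>x. (phi x / dt * rho x)\<^sup>2)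
      \<le> (phi_hi / dt)\<^sup>2 * integral\<^sup>L (lebesgue_on \<Omega>) (\<lambda>x. (rho x)\<^sup>2)"
    using phi_dt_bounds(2) by (intro integral_square_bounded_mult_le rho_sq) auto
  moreover have "- L2_inner \<Omega> (\<lambda>x. phi x / dt * rho x) Dm
      \<le> 1 / 4 * integral\<^sup>L (lebesgue_on \<Omega>) (\<lambda>x. (Dm x)\<^sup>2)
        + integral\<^sup>L (lebesgue_on \<Omega>) (\<lambda>x. (phi x / dt * rho x)\<^sup>2)"
    using integral_mult_le_scaled_squares[OF _ Dm_sq, of "\<lambda>x. - (phi x / dt * rho x)" 1]
      square_integrable_phi_dt_mult[OF rho_L2]
    by (simp add: L2_inner_def square_integrable_def)
  moreover have "L2_inner \<Omega> Dm Dm = integral\<^sup>L (lebesgue_on \<Omega>) (\<lambda>x. (Dm x)\<^sup>2)"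
    by (simp add: L2_inner_def power2_eq_square)
  ultimately show ?thesis
    using mass_eq source by linarith
qed

lemma weak_solution_bounded:
  obtains K1 K2 where "0 < K1" "0 < K2"
    "\<And>\<epsilon> m rho Dm. 0 \<le> \<epsilon> \<Longrightarrow> weak_solution \<epsilon> m rho Dm \<Longrightarrow>
      Wdiv_norm \<Omega> s m Dm \<le> K1 \<and> Lp_norm 2 \<Omega> rho \<le> K2"
proof -
  obtain B where energy: "\<And>\<epsilon> m rho Dm. 0 \<le> \<epsilon> \<Longrightarrow> weak_solution \<epsilon> m rho Dm \<Longrightarrow>
      a_lo / 2 * integral\<^sup>L (lebesgue_on \<Omega>) (\<lambda>x. norm (m x) powr s)
      + phi_lo / dt / 2 * integral\<^sup>L (lebesgue_on \<Omega>) (\<lambda>x. (rho x)\<^sup>2) \<le> B"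
    using energy_estimate by blast
  define c where "c = phi_lo / dt"
  have c_pos: "0 < c"
    using phi_lo_pos dt_pos by (simp add: c_def)
  define K_div where
    "K_div = 2 * integral\<^sup>L (lebesgue_on \<Omega>) (\<lambda>x. (fbar x)\<^sup>2) + 2 * (phi_hi / dt)\<^sup>2 * (2 * B / c)"
  define K1 where "K1 = (2 * B / a_lo) powr (1 / s) + K_div powr (1 / 2) + 1"
  define K2 where "K2 = (2 * B / c) powr (1 / 2) + 1"
  have "Wdiv_norm \<Omega> s m Dm \<le> K1 \<and> Lp_norm 2 \<Omega> rho \<le> K2"
    if "0 \<le> \<epsilon>" "weak_solution \<epsilon> m rho Dm" for \<epsilon> m rho Dm
  proof -
    define X where "X = integral\<^sup>L (lebesgue_on \<Omega>) (\<lambda>x. norm (m x) powr s)"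
    define Y where "Y = integral\<^sup>L (lebesgue_on \<Omega>) (\<lambda>x. (rho x)\<^sup>2)"
    define A where "A = integral\<^sup>L (lebesgue_on \<Omega>) (\<lambda>x. (Dm x)\<^sup>2)"
    have X_nonneg: "0 \<le> X" and Y_nonneg: "0 \<le> Y" and A_nonneg: "0 \<le> A"
      by (simp_all add: X_def Y_def A_def)
    have XY: "a_lo / 2 * X + c / 2 * Y \<le> B"
      using energy[OF that] by (simp add: X_def Y_def c_def)
    moreover have "0 \<le> a_lo / 2 * X" "0 \<le> c / 2 * Y"
      using a_lo_pos c_pos X_nonneg Y_nonneg by simp_all
    ultimately have "a_lo / 2 * X \<le> B" "c / 2 * Y \<le> B"
      by linarith+
    then have X_le: "X \<le> 2 * B / a_lo" and Y_le: "Y \<le> 2 * B / c"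
      using a_lo_pos c_pos by (simp_all add: field_simps)
    have "A \<le> K_div"
      using divergence_estimate[OF that(2)] mult_left_mono[OF Y_le, of "2 * (phi_hi / dt)\<^sup>2"]
      by (simp add: A_def Y_def K_div_def)
    then have "Wdiv_norm \<Omega> s m Dm \<le> (2 * B / a_lo) powr (1 / s) + K_div powr (1 / 2)"
      using X_le X_nonneg A_nonneg s_ge_2
      by (simp add: Wdiv_norm_def Lp_norm_def Lp_norm_2_real X_def A_def add_mono powr_mono2)
    moreover have "Lp_norm 2 \<Omega> rho \<le> (2 * B / c) powr (1 / 2)"
      using Y_le Y_nonneg by (simp add: Lp_norm_2_real Y_def powr_mono2)
    ultimately show ?thesis
      unfolding K1_def K2_def by linarith
  qed
  moreover have "0 < K1" "0 < K2"
    unfolding K1_def K2_def by (simp_all add: add_nonneg_pos)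
  ultimately show ?thesis
    using that by blast
qed

end

theorem lemma3p2:
  fixes \<Omega> :: "'a::euclidean_space set"
    and N :: nat and \<alpha> :: "nat \<Rightarrow> real" and a :: "nat \<Rightarrow> 'a \<Rightarrow> real"
    and a_lo a_hi dt phi_lo phi_hi :: real
    and phi f rho_prev R :: "'a \<Rightarrow> real" and G :: "'a \<Rightarrow> 'a"
  assumes dim: "DIM('a) \<ge> 2"
    and dom: "open \<Omega>" "bounded \<Omega>" "C1_boundary \<Omega>"
    and N: "N \<ge> 1"
    and alpha0: "\<alpha> 0 = 0"
    and alpha_mono: "\<And>i. i < N \<Longrightarrow> \<alpha> i < \<alpha> (Suc i)"
    and a_meas: "\<And>i. i \<le> N \<Longrightarrow> a i \<in> borel_measurable (lebesgue_on \<Omega>)"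
    and a_lo: "0 < a_lo" and a_hi: "a_lo \<le> a_hi"
    and a_end: "\<And>x. x \<in> \<Omega> \<Longrightarrow> a_lo \<le> a 0 x \<and> a 0 x \<le> a_hi \<and> a_lo \<le> a N x \<and> a N x \<le> a_hi"
    and a_mid: "\<And>i x. 1 \<le> i \<Longrightarrow> i \<le> N - 1 \<Longrightarrow> x \<in> \<Omega> \<Longrightarrow> 0 \<le> a i x \<and> a i x \<le> a_hi"
    and dt: "dt > 0"
    and phi_meas: "phi \<in> borel_measurable (lebesgue_on \<Omega>)"
    and phi_bd: "0 < phi_lo" "\<And>x. x \<in> \<Omega> \<Longrightarrow> phi_lo \<le> phi x \<and> phi x \<le> phi_hi"
    and f: "Lp_on 2 \<Omega> f"
    and rho_prev: "Lp_on 2 \<Omega> rho_prev"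
    and bdry: "Lp_on 2 \<Omega> R" "Lp_on ((\<alpha> N + 2) / (\<alpha> N + 1)) \<Omega> G" "weak_grad \<Omega> R G"
  shows "\<exists>K1>0. \<exists>K2>0. \<exists>\<epsilon>0>0. \<forall>\<epsilon> m rho Dm.
      0 < \<epsilon> \<and> \<epsilon> < \<epsilon>0 \<and>
      in_Wdiv \<Omega> (\<alpha> N + 2) m Dm \<and> Lp_on 2 \<Omega> rho \<and>
      (\<forall>v Dv. in_Wdiv \<Omega> (\<alpha> N + 2) v Dv \<longrightarrow>
          integral\<^sup>L (lebesgue_on \<Omega>) (\<lambda>x. Fcoef a \<alpha> N x (norm (m x)) * (m x \<bullet> v x))
          + \<epsilon> * L2_inner \<Omega> Dm Dv - L2_inner \<Omega> Dv rho
          = - bdry_pair \<Omega> R G v Dv) \<and>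
      (\<forall>q. Lp_on 2 \<Omega> q \<longrightarrow>
          L2_inner \<Omega> (\<lambda>x. phi x / dt * rho x) q + L2_inner \<Omega> Dm q
          = L2_inner \<Omega> (\<lambda>x. f x + phi x / dt * rho_prev x) q)
      \<longrightarrow> Wdiv_norm \<Omega> (\<alpha> N + 2) m Dm \<le> K1 \<and> Lp_norm 2 \<Omega> rho \<le> K2"
proof -
  have alpha_le: "\<alpha> i \<le> \<alpha> j" if "i \<le> j" "j \<le> N" for i j
  proof (rule lift_Suc_mono_le_ivl[of "{..<N}" \<alpha>])
    show "\<And>n. n \<in> {..<N} \<Longrightarrow> \<alpha> n \<le> \<alpha> (Suc n)"
      using alpha_mono by (simp add: less_imp_le)
  qed (use that in auto)
  have a_range: "0 \<le> a i x \<and> a i x \<le> a_hi" if "i \<le> N" "x \<in> \<Omega>" for i x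
    using a_end[OF that(2)] a_mid[OF _ _ that(2), of i] a_lo that(1)
    by (cases "i = 0 \<or> i = N") auto
  interpret forchheimer_time_step \<Omega> N \<alpha> a a_lo a_hi dt phi_lo phi_hi phi f rho_prev R G
    using lmeasurable_open[OF dom(2,1)] N alpha_le[of 0] alpha0 alpha_le a_meas a_lo a_range a_end
      dt phi_meas phi_bd f rho_prev bdry(1,2)
    by unfold_locales auto
  obtain K1 K2 where "0 < K1" "0 < K2" and bounded: "\<And>\<epsilon> m rho Dm. 0 \<le> \<epsilon> \<Longrightarrow>
      weak_solution \<epsilon> m rho Dm \<Longrightarrow> Wdiv_norm \<Omega> s m Dm \<le> K1 \<and> Lp_norm 2 \<Omega> rho \<le> K2"
    using weak_solution_bounded by blast
  show ?thesis
    using \<open>0 < K1\<close> \<open>0 < K2\<close> bounded[unfolded weak_solution_def s_def fbar_def]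
    by (intro exI[of _ K1] exI[of _ K2] exI[of _ 1] conjI allI impI zero_less_one) (auto dest: less_imp_le)
qed

end
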